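(* Let $\alpha$ be an admissible anisotropy. There exists $C>0$ such that for every $j\ge0$ and every $f\in\mathcal S'(\mathbb R^2)$ whose Fourier transform $\hat f$ is a locally square-integrable function, \[C^{-1}\sum_{(j_1,j_2)\in\Gamma_j(\alpha)}\|\phi_{j_1,j_2}\hat f\|_{L^2}^2\le\|g_j^\alpha\hat f\|_{L^2}^2\le C\sum_{(j_1,j_2)\in\Gamma_j(\alpha)}\|\phi_{j_1,j_2}\hat f\|_{L^2}^2,\] where $g_j^\alpha=\sum_{(j_1,j_2)\in\Gamma_j(\alpha)}\phi_{j_1,j_2}$.
   Context: $\mathbb N=\{0,1,2,\dots\}$, $[x]$ integer part. Admissible anisotropy: $\alpha_i\ge0$, $\alpha_1+\alpha_2=2$. Hyperbolic resolution of unity: $\theta_0\in\mathcal S(\mathbb R)$, $\theta_0\ge0$, supported in $[-2,2]$, $=1$ on $[-1,1]$; $\theta_j(t)=\theta_0(2^{-j}t)-\theta_0(2^{-(j-1)}t)$ ($j\ge1$), assumed nonnegative; $\phi_{j_1,j_2}(\xi)=\theta_{j_1}(\xi_1)\theta_{j_2}(\xi_2)$. $\Gamma_j(\alpha)=\Gamma_j^{HL}\cup\Gamma_j^{LH}\cup\Gamma_j^{HH}$ with $\Gamma_j^{HL}=\{(j_1,j_2)\in\mathbb N^2:[(j-1)\alpha_1]-1\le j_1\le[j\alpha_1]+1,\ 0\le j_2\le[(j-1)\alpha_2]-1\}$, $\Gamma_j^{LH}=\{(j_1,j_2)\in\mathbb N^2:0\le j_1\le[(j-1)\alpha_1]-1,\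 [(j-1)\alpha_2]-1\le j_2\le[j\alpha_2]+1\}$, $\Gamma_j^{HH}=\{(j_1,j_2)\in\mathbb N^2:[(j-1)\alpha_1]-1\le j_1\le[j\alpha_1]+1,\ [(j-1)\alpha_2]-1\le j_2\le[j\alpha_2]+1\}$. *)

theory Defs
  imports "HOL-Analysis.Analysis"
begin

definition schwartz :: "(real \<Rightarrow> real) \<Rightarrow> bool" where
  "schwartz f \<longleftrightarrow>
     (\<forall>k x. ((deriv ^^ k) f) differentiable (at x)) \<and>
     (\<forall>k n. bounded (range (\<lambda>x. \<bar>x\<bar> ^ n * (deriv ^^ k) f x)))"

definition theta :: "(real \<Rightarrow> real) \<Rightarrow> nat \<Rightarrow> real \<Rightarrow> real" where
  "theta \<theta>0 j t = (if j = 0 then \<theta>0 t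
                   else \<theta>0 (t / 2 ^ j) - \<theta>0 (t / 2 ^ (j - 1)))"

definition phi :: "(real \<Rightarrow> real) \<Rightarrow> nat \<Rightarrow> nat \<Rightarrow> real \<times> real \<Rightarrow> real" where
  "phi \<theta>0 j1 j2 \<xi> = theta \<theta>0 j1 (fst \<xi>) * theta \<theta>0 j2 (snd \<xi>)"

definition admissible :: "real \<Rightarrow> real \<Rightarrow> bool" where
  "admissible a1 a2 \<longleftrightarrow> a1 \<ge> 0 \<and> a2 \<ge> 0 \<and> a1 + a2 = 2"

definition GammaHL :: "real \<Rightarrow> real \<Rightarrow> nat \<Rightarrow> (nat \<times> nat) set" where
  "GammaHL a1 a2 j = {(j1, j2). \<lfloor>(real j - 1) * a1\<rfloor> - 1 \<le> int j1 \<and> int j1 \<le> \<lfloor>real j * a1\<rfloor> + 1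
                       \<and> int j2 \<le> \<lfloor>(real j - 1) * a2\<rfloor> - 1}"

definition GammaLH :: "real \<Rightarrow> real \<Rightarrow> nat \<Rightarrow> (nat \<times> nat) set" where
  "GammaLH a1 a2 j = {(j1, j2). int j1 \<le> \<lfloor>(real j - 1) * a1\<rfloor> - 1
                       \<and> \<lfloor>(real j - 1) * a2\<rfloor> - 1 \<le> int j2 \<and> int j2 \<le> \<lfloor>real j * a2\<rfloor> + 1}"

definition GammaHH :: "real \<Rightarrow> real \<Rightarrow> nat \<Rightarrow> (nat \<times> nat) set" where
  "GammaHH a1 a2 j = {(j1, j2). \<lfloor>(real j - 1) * a1\<rfloor> - 1 \<le> int j1 \<and> int j1 \<le> \<lfloor>real j * a1\<rfloor> + 1
                       \<and> \<lfloor>(real j - 1) * a2\<rfloor> - 1 \<le> int j2 \<and> int j2 \<le> \<lfloor>real j * a2\<rfloor> + 1}"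

definition Gamma :: "real \<Rightarrow> real \<Rightarrow> nat \<Rightarrow> (nat \<times> nat) set" where
  "Gamma a1 a2 j = GammaHL a1 a2 j \<union> GammaLH a1 a2 j \<union> GammaHH a1 a2 j"

definition g_alpha :: "(real \<Rightarrow> real) \<Rightarrow> real \<Rightarrow> real \<Rightarrow> nat \<Rightarrow> real \<times> real \<Rightarrow> real" where
  "g_alpha \<theta>0 a1 a2 j \<xi> = (\<Sum>(j1, j2)\<in>Gamma a1 a2 j. phi \<theta>0 j1 j2 \<xi>)"

text \<open>Squared L2 norm of a (possibly not square integrable) function, as an
extended nonnegative real.\<close>
definition L2sq :: "(real \<times> real \<Rightarrow> complex) \<Rightarrow> ennreal" where
  "L2sq h = (\<integral>\<^sup>+ x. ennreal ((cmod (h x))\<^sup>2) \<partial>lborel)"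

definition locally_L2 :: "(real \<times> real \<Rightarrow> complex) \<Rightarrow> bool" where
  "locally_L2 F \<longleftrightarrow> F \<in> borel_measurable lborel \<and>
     (\<forall>K. compact K \<longrightarrow> set_integrable lborel K (\<lambda>x. (cmod (F x))\<^sup>2))"

end

theory Submission
  imports Defs
begin

text \<open>For fixed \<xi>, at most two of the theta_j(\<xi>1) and two of the theta_j(\<xi>2) are nonzero,
so at most four of the nonnegative products phi_{j1,j2}(\<xi>) are. Pointwise, nonnegativity gives
\<Sum> phi^2 \<le> (\<Sum> phi)^2, and Cauchy-Schwarz over the four nonzero terms gives
(\<Sum> phi)^2 \<le> 4 \<Sum> phi^2; integrating against |F|^2 yields the claim with C = 4,
uniformly in \<alpha> and j.\<close>

lemma theta_nonzero_imp_dyadic_range: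
  assumes vanish: "\<And>t. \<bar>t\<bar> > 2 \<Longrightarrow> \<theta>0 t = 0"
    and one: "\<And>t. \<bar>t\<bar> \<le> 1 \<Longrightarrow> \<theta>0 t = 1"
    and nz: "theta \<theta>0 j t \<noteq> 0"
  shows "(j = 0 \<and> \<bar>t\<bar> \<le> 2) \<or> (j \<ge> 1 \<and> (2::real) ^ (j - 1) < \<bar>t\<bar> \<and> \<bar>t\<bar> \<le> 2 ^ (j + 1))"
proof (cases "j = 0")
  case True
  then show ?thesis using nz vanish by (force simp: theta_def)
next
  case False
  have pow_j: "(2::real) ^ j = 2 * 2 ^ (j - 1)"
    using False by (metis Suc_pred' gr0I power_Suc)
  have "\<not> \<bar>t\<bar> \<le> 2 ^ (j - 1)"
  proof
    assume "\<bar>t\<bar> \<le> 2 ^ (j - 1)"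
    then have "\<bar>t / 2 ^ j\<bar> \<le> 1" and "\<bar>t / 2 ^ (j - 1)\<bar> \<le> 1"
      using pow_j by (simp_all add: abs_divide divide_le_eq)
    then show False using nz False one by (simp add: theta_def)
  qed
  moreover have "\<not> \<bar>t\<bar> > 2 ^ (j + 1)"
  proof
    assume "\<bar>t\<bar> > 2 ^ (j + 1)"
    then have "\<bar>t / 2 ^ j\<bar> > 2" and "\<bar>t / 2 ^ (j - 1)\<bar> > 2"
      using pow_j by (simp_all add: abs_divide less_divide_eq)
    then show False using nz False vanish by (simp add: theta_def)
  qed
  ultimately show ?thesis using False by auto
qed

lemma theta_nonzero_indices_subset:
  assumes vanish: "\<And>t. \<bar>t\<bar> > 2 \<Longrightarrow> \<theta>0 t = 0"
    and one: "\<And>t. \<bar>t\<bar> \<le> 1 \<Longrightarrow> \<theta>0 t = 1"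
  shows "\<exists>m. {j. theta \<theta>0 j t \<noteq> 0} \<subseteq> {m, Suc m}"
proof (cases "\<exists>j. theta \<theta>0 j t \<noteq> 0")
  case False
  then show ?thesis by auto
next
  case True
  define m where "m = (LEAST j. theta \<theta>0 j t \<noteq> 0)"
  have m: "theta \<theta>0 m t \<noteq> 0"
    using True unfolding m_def by (rule LeastI_ex)
  have "k \<le> Suc m" if k: "theta \<theta>0 k t \<noteq> 0" for k
  proof (rule ccontr)
    assume "\<not> k \<le> Suc m"
    then have "(2::real) ^ (m + 1) \<le> 2 ^ (k - 1)" and "(2::real) ^ 1 \<le> 2 ^ (k - 1)"
      by (intro power_increasing; simp)+
    then show False
      using theta_nonzero_imp_dyadic_range[OF vanish one m]
        theta_nonzero_imp_dyadic_range[OF vanish one k] by auto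
  qed
  moreover have "m \<le> k" if "theta \<theta>0 k t \<noteq> 0" for k
    using that unfolding m_def by (rule Least_le)
  ultimately show ?thesis by (force intro!: exI[of _ m])
qed

lemma card_theta_nonzero_indices:
  assumes "\<And>t. \<bar>t\<bar> > 2 \<Longrightarrow> \<theta>0 t = 0" and "\<And>t. \<bar>t\<bar> \<le> 1 \<Longrightarrow> \<theta>0 t = 1"
  shows "finite {j. theta \<theta>0 j t \<noteq> 0}" and "card {j. theta \<theta>0 j t \<noteq> 0} \<le> 2"
proof -
  obtain m where sub: "{j. theta \<theta>0 j t \<noteq> 0} \<subseteq> {m, Suc m}"
    using theta_nonzero_indices_subset[of \<theta>0 t, OF assms] by blast
  then show "finite {j. theta \<theta>0 j t \<noteq> 0}" by (rule finite_subset) simp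
  have "card {j. theta \<theta>0 j t \<noteq> 0} \<le> card {m, Suc m}"
    using sub by (rule card_mono[rotated]) simp
  then show "card {j. theta \<theta>0 j t \<noteq> 0} \<le> 2" by simp
qed

lemma sum_squares_le_square_sum:
  fixes f :: "'a \<Rightarrow> real"
  assumes "\<And>x. x \<in> S \<Longrightarrow> f x \<ge> 0"
  shows "(\<Sum>x\<in>S. (f x)\<^sup>2) \<le> (sum f S)\<^sup>2"
proof -
  have "L2_set f S \<le> sum f S"
    using assms by (rule L2_set_le_sum)
  then have "(L2_set f S)\<^sup>2 \<le> (sum f S)\<^sup>2"
    by (intro power_mono) (simp_all add: L2_set_nonneg)
  then show ?thesis
    by (simp add: L2_set_def sum_nonneg)
qed

lemma square_sum_le_card_support_mult_sum_squares:
  fixes f :: "'a \<Rightarrow> real"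
  assumes "finite S" and "card {x\<in>S. f x \<noteq> 0} \<le> n"
  shows "(sum f S)\<^sup>2 \<le> n * (\<Sum>x\<in>S. (f x)\<^sup>2)"
proof -
  let ?T = "{x\<in>S. f x \<noteq> 0}"
  have "sum f S = sum f ?T" and sq: "(\<Sum>x\<in>S. (f x)\<^sup>2) = (\<Sum>x\<in>?T. (f x)\<^sup>2)"
    using assms(1) by (auto intro: sum.mono_neutral_right)
  then have "(sum f S)\<^sup>2 \<le> (\<Sum>x\<in>?T. (f x)\<^sup>2) * card ?T"
    using sum_squared_le_sum_of_squares by metis
  also have "\<dots> \<le> (\<Sum>x\<in>?T. (f x)\<^sup>2) * n"
    using assms(2) by (intro mult_left_mono) (auto intro: sum_nonneg)
  finally show ?thesis
    using sq by (simp add: mult.commute)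
qed

lemma square_sum_phi_le:
  assumes vanish: "\<And>t. \<bar>t\<bar> > 2 \<Longrightarrow> \<theta>0 t = 0"
    and one: "\<And>t. \<bar>t\<bar> \<le> 1 \<Longrightarrow> \<theta>0 t = 1"
    and "finite G"
  shows "(\<Sum>(j1, j2)\<in>G. phi \<theta>0 j1 j2 \<xi>)\<^sup>2 \<le> 4 * (\<Sum>(j1, j2)\<in>G. (phi \<theta>0 j1 j2 \<xi>)\<^sup>2)"
proof -
  let ?f = "\<lambda>(j1, j2). phi \<theta>0 j1 j2 \<xi>"
  let ?A = "{j. theta \<theta>0 j (fst \<xi>) \<noteq> 0}" and ?B = "{j. theta \<theta>0 j (snd \<xi>) \<noteq> 0}"
  note A = card_theta_nonzero_indices[of \<theta>0 "fst \<xi>", OF vanish one]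
  note B = card_theta_nonzero_indices[of \<theta>0 "snd \<xi>", OF vanish one]
  have "card {p\<in>G. ?f p \<noteq> 0} \<le> card (?A \<times> ?B)"
    using A(1) B(1) by (intro card_mono) (auto simp: phi_def)
  also have "\<dots> \<le> 2 * 2"
    unfolding card_cartesian_product using A(2) B(2) by (rule mult_le_mono)
  finally have "(sum ?f G)\<^sup>2 \<le> real (2 * 2) * (\<Sum>p\<in>G. (?f p)\<^sup>2)"
    by (rule square_sum_le_card_support_mult_sum_squares[OF \<open>finite G\<close>])
  then show ?thesis
    by (simp add: case_prod_unfold)
qed

lemma theta_nonneg:
  assumes "\<And>t. \<theta>0 t \<ge> 0" and "\<And>j t. j \<ge> 1 \<Longrightarrow> theta \<theta>0 j t \<ge> 0"
  shows "theta \<theta>0 j t \<ge> 0"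
  using assms by (cases "j = 0") (simp_all add: theta_def)

lemma borel_measurable_phi:
  assumes "continuous_on UNIV \<theta>0"
  shows "phi \<theta>0 j1 j2 \<in> borel_measurable borel"
proof -
  have theta: "continuous_on UNIV (theta \<theta>0 j)" for j
    unfolding theta_def[abs_def] using assms
    by (cases "j = 0") (auto intro!: continuous_intros continuous_on_compose2[OF assms])
  have "continuous_on UNIV (phi \<theta>0 j1 j2)"
    unfolding phi_def[abs_def]
    by (intro continuous_intros continuous_on_compose2[OF theta]) auto
  then show ?thesis
    by (rule borel_measurable_continuous_onI)
qed

lemma L2sq_of_real_mult:
  "L2sq (\<lambda>\<xi>. of_real (w \<xi>) * F \<xi>) = (\<integral>\<^sup>+ \<xi>. ennreal ((w \<xi>)\<^sup>2 * (cmod (F \<xi>))\<^sup>2) \<partial>lborel)"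
  by (simp add: L2sq_def norm_mult power_mult_distrib)

lemma sum_L2sq_of_real_mult:
  assumes [measurable]: "\<And>p. \<phi> p \<in> borel_measurable borel" "F \<in> borel_measurable borel"
  shows "(\<Sum>p\<in>G. L2sq (\<lambda>\<xi>. of_real (\<phi> p \<xi>) * F \<xi>))
           = (\<integral>\<^sup>+ \<xi>. ennreal ((\<Sum>p\<in>G. (\<phi> p \<xi>)\<^sup>2) * (cmod (F \<xi>))\<^sup>2) \<partial>lborel)"
proof -
  have "(\<Sum>p\<in>G. L2sq (\<lambda>\<xi>. of_real (\<phi> p \<xi>) * F \<xi>))
          = (\<integral>\<^sup>+ \<xi>. (\<Sum>p\<in>G. ennreal ((\<phi> p \<xi>)\<^sup>2 * (cmod (F \<xi>))\<^sup>2)) \<partial>lborel)"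
    unfolding L2sq_of_real_mult by (rule nn_integral_sum[symmetric]) simp
  also have "\<dots> = (\<integral>\<^sup>+ \<xi>. ennreal ((\<Sum>p\<in>G. (\<phi> p \<xi>)\<^sup>2) * (cmod (F \<xi>))\<^sup>2) \<partial>lborel)"
    by (intro nn_integral_cong) (simp add: sum_distrib_right)
  finally show ?thesis .
qed

lemma L2sq_sum_bounds:
  fixes \<phi> :: "'a \<Rightarrow> real \<times> real \<Rightarrow> real"
  assumes meas: "\<And>p. \<phi> p \<in> borel_measurable borel" "F \<in> borel_measurable borel"
    and nonneg: "\<And>p \<xi>. p \<in> G \<Longrightarrow> \<phi> p \<xi> \<ge> 0"
    and overlap: "\<And>\<xi>. (\<Sum>p\<in>G. \<phi> p \<xi>)\<^sup>2 \<le> C * (\<Sum>p\<in>G. (\<phi> p \<xi>)\<^sup>2)"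
    and "C \<ge> 0"
  shows "(\<Sum>p\<in>G. L2sq (\<lambda>\<xi>. of_real (\<phi> p \<xi>) * F \<xi>)) \<le> L2sq (\<lambda>\<xi>. of_real (\<Sum>p\<in>G. \<phi> p \<xi>) * F \<xi>)"
    and "L2sq (\<lambda>\<xi>. of_real (\<Sum>p\<in>G. \<phi> p \<xi>) * F \<xi>) \<le> ennreal C * (\<Sum>p\<in>G. L2sq (\<lambda>\<xi>. of_real (\<phi> p \<xi>) * F \<xi>))"
proof -
  note sum_eq = sum_L2sq_of_real_mult[OF meas]
  show "(\<Sum>p\<in>G. L2sq (\<lambda>\<xi>. of_real (\<phi> p \<xi>) * F \<xi>)) \<le> L2sq (\<lambda>\<xi>. of_real (\<Sum>p\<in>G. \<phi> p \<xi>) * F \<xi>)"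
    unfolding sum_eq unfolding L2sq_of_real_mult
    using nonneg by (intro nn_integral_mono ennreal_leI mult_right_mono sum_squares_le_square_sum) auto
  have "L2sq (\<lambda>\<xi>. of_real (\<Sum>p\<in>G. \<phi> p \<xi>) * F \<xi>)
          \<le> (\<integral>\<^sup>+ \<xi>. ennreal C * ennreal ((\<Sum>p\<in>G. (\<phi> p \<xi>)\<^sup>2) * (cmod (F \<xi>))\<^sup>2) \<partial>lborel)"
    unfolding L2sq_of_real_mult
  proof (intro nn_integral_mono)
    fix \<xi>
    have "(\<Sum>p\<in>G. \<phi> p \<xi>)\<^sup>2 * (cmod (F \<xi>))\<^sup>2 \<le> C * ((\<Sum>p\<in>G. (\<phi> p \<xi>)\<^sup>2) * (cmod (F \<xi>))\<^sup>2)"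
      using overlap[of \<xi>] by (simp add: mult.assoc[symmetric] mult_right_mono)
    then show "ennreal ((\<Sum>p\<in>G. \<phi> p \<xi>)\<^sup>2 * (cmod (F \<xi>))\<^sup>2)
                 \<le> ennreal C * ennreal ((\<Sum>p\<in>G. (\<phi> p \<xi>)\<^sup>2) * (cmod (F \<xi>))\<^sup>2)"
      using \<open>C \<ge> 0\<close> by (simp add: ennreal_mult'[symmetric] ennreal_leI)
  qed
  also have "\<dots> = ennreal C * (\<Sum>p\<in>G. L2sq (\<lambda>\<xi>. of_real (\<phi> p \<xi>) * F \<xi>))"
    unfolding sum_eq using meas by (intro nn_integral_cmult) simp
  finally show "L2sq (\<lambda>\<xi>. of_real (\<Sum>p\<in>G. \<phi> p \<xi>) * F \<xi>) \<le> ennreal C * (\<Sum>p\<in>G. L2sq (\<lambda>\<xi>. of_real (\<phi> p \<xi>) * F \<xi>))" .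
qed

theorem lemma4:
  fixes \<theta>0 :: "real \<Rightarrow> real" and a1 a2 :: real
  assumes "schwartz \<theta>0"
    and "\<And>t. \<theta>0 t \<ge> 0"
    and "\<And>t. \<bar>t\<bar> > 2 \<Longrightarrow> \<theta>0 t = 0"
    and "\<And>t. \<bar>t\<bar> \<le> 1 \<Longrightarrow> \<theta>0 t = 1"
    and "\<And>j t. j \<ge> 1 \<Longrightarrow> theta \<theta>0 j t \<ge> 0"
    and "admissible a1 a2"
  shows "\<exists>C>0. \<forall>j::nat. \<forall>F :: real \<times> real \<Rightarrow> complex. locally_L2 F \<longrightarrow>
           ennreal (1 / C) * (\<Sum>(j1, j2)\<in>Gamma a1 a2 j. L2sq (\<lambda>\<xi>. of_real (phi \<theta>0 j1 j2 \<xi>) * F \<xi>))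
             \<le> L2sq (\<lambda>\<xi>. of_real (g_alpha \<theta>0 a1 a2 j \<xi>) * F \<xi>) \<and>
           L2sq (\<lambda>\<xi>. of_real (g_alpha \<theta>0 a1 a2 j \<xi>) * F \<xi>)
             \<le> ennreal C * (\<Sum>(j1, j2)\<in>Gamma a1 a2 j. L2sq (\<lambda>\<xi>. of_real (phi \<theta>0 j1 j2 \<xi>) * F \<xi>))"
proof (intro exI[of _ 4] conjI allI impI)
  fix j and F :: "real \<times> real \<Rightarrow> complex"
  assume "locally_L2 F"
  let ?G = "Gamma a1 a2 j" and ?\<phi> = "\<lambda>(j1, j2). phi \<theta>0 j1 j2"
  have "\<theta>0 differentiable (at x)" for x
    using \<open>schwartz \<theta>0\<close> unfolding schwartz_def by (metis funpow_0)
  then have "continuous_on UNIV \<theta>0"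
    by (simp add: continuous_at_imp_continuous_on differentiable_imp_continuous_within)
  then have meas: "\<And>p. ?\<phi> p \<in> borel_measurable borel"
    by (simp add: borel_measurable_phi split_beta)
  have F_meas: "F \<in> borel_measurable borel"
    using \<open>locally_L2 F\<close> by (simp add: locally_L2_def)
  have nonneg: "\<And>p \<xi>. ?\<phi> p \<xi> \<ge> 0"
    using theta_nonneg[OF assms(2,5)] by (simp add: phi_def split_beta)
  have overlap: "(\<Sum>p\<in>?G. ?\<phi> p \<xi>)\<^sup>2 \<le> 4 * (\<Sum>p\<in>?G. (?\<phi> p \<xi>)\<^sup>2)" for \<xi>
  proof (cases "finite ?G")
    case True
    then show ?thesis
      using square_sum_phi_le[OF assms(3,4)] by (simp add: case_prod_unfold)
  qed simp
  note bounds = L2sq_sum_bounds[OF meas F_meas nonneg overlap, simplified]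
  have g_alpha: "g_alpha \<theta>0 a1 a2 j \<xi> = (\<Sum>p\<in>?G. ?\<phi> p \<xi>)" for \<xi>
    by (simp add: g_alpha_def case_prod_unfold)
  show "ennreal (1 / 4) * (\<Sum>(j1, j2)\<in>?G. L2sq (\<lambda>\<xi>. of_real (phi \<theta>0 j1 j2 \<xi>) * F \<xi>))
          \<le> L2sq (\<lambda>\<xi>. of_real (g_alpha \<theta>0 a1 a2 j \<xi>) * F \<xi>)"
  proof -
    have "ennreal (1 / 4) * (\<Sum>p\<in>?G. L2sq (\<lambda>\<xi>. of_real (?\<phi> p \<xi>) * F \<xi>))
            \<le> 1 * (\<Sum>p\<in>?G. L2sq (\<lambda>\<xi>. of_real (?\<phi> p \<xi>) * F \<xi>))"
      by (intro mult_right_mono) simp_all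
    then show ?thesis
      using bounds(1) unfolding g_alpha by (simp add: case_prod_unfold)
  qed
  show "L2sq (\<lambda>\<xi>. of_real (g_alpha \<theta>0 a1 a2 j \<xi>) * F \<xi>)
          \<le> ennreal 4 * (\<Sum>(j1, j2)\<in>?G. L2sq (\<lambda>\<xi>. of_real (phi \<theta>0 j1 j2 \<xi>) * F \<xi>))"
    using bounds(2) unfolding g_alpha by (simp add: case_prod_unfold)
qed simp

end
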